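(* Let $\mathcal V$ be a multivector field on $X$ and assume $X$ is invariant. Let $\mathcal M=\{M_i\mid i\in\mathbb P\}$ (bijectively indexed by a finite set $\mathbb P$) be the family of all strongly connected components $M$ of the digraph $G_{\mathcal V}$ such that some essential full solution has image contained in $M$. Define $i\le j$ on $\mathbb P$ iff there is a path in $X$ from a point of $M_j$ to a point of $M_i$. Then $\le$ is a partial order on $\mathbb P$ and $\mathcal M$ is a Morse decomposition of $X$ with respect to $(\mathbb P,\le)$. Moreover, $\mathcal M$ is minimal in the sense that for every $M\in\mathcal M$, no Morse decomposition of $M$ (for the multivector field $\mathcal V_M:=\{V\in\mathcal V: V\subset M\}$ induced on $M$) contains two distinct nonempty Morse sets.
   Context: $X$ is a finite $T_0$ topological space. For $A\subset X$, $\operatorname{cl}A$ is its closure and $\operatorname{mo}A:=\operatorname{cl}A\setminus A$. $A$ is locally closed if it is the intersection of an open and a closed subset of $X$. $H$ denotes relative singular homology. A multivector is a nonempty locally closed subset of $X$; a multivector field $\mathcal V$ on $X$ is a partition of $X$ into multivectors. For $x\in X$, $[x]$ denotes the element of $\mathcal V$ containing $x$. A multivector $V$ is critical if $H(\operatorname{cl}V,\operatorname{mo}V)\neq0$, regular otherwise. $A\subset X$ is $\mathcal V$-compatible if for every $x\in X$ either $[x]\cap A=\emptyset$ or $[x]\subset A$. Put $\Pi_{\mathcal V}(x):=[x]\cup\operatorname{cl}\{x\}$ and $\Pi_{\mathcal V}(A):=\bigcup_{x\in A}\Pi_{\mathcal V}(x)$. $G_{\mathcal V}$ is the digraph with vertex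 set $X$ and an edge $x\to y$ iff $y\in\Pi_{\mathcal V}(x)$; its strongly connected components are the equivalence classes of the relation "there is a directed path from $x$ to $y$ and from $y$ to $x$". A $\mathbb Z$-interval is $\mathbb Z\cap I$ for a real interval $I$. A solution in $A\subset X$ is a map $\varphi:D\to A$ on a $\mathbb Z$-interval $D$ with $\varphi(i+1)\in\Pi_{\mathcal V}(\varphi(i))$ whenever $i,i+1\in D$; it is full if $D=\mathbb Z$, and a path if $D$ is bounded, going from $\varphi(\min D)$ to $\varphi(\max D)$. A full solution $\varphi$ is essential if for every $t\in\mathbb Z$ with $[\varphi(t)]$ regular, the set $\{s\in\mathbb Z:\varphi(s)\notin[\varphi(t)]\}$ is unbounded below and unbounded above. $\operatorname{Inv}A$ is the set of $x\in A$ such that there is an essential full solution $\varphi$ with image in $A$ and $\varphi(0)=x$; $A$ is invariant if $\operatorname{Inv}A=A$. A closed set $N$ isolates an invariant set $S\subset N$ if (a) every path in $N$ with both endpoints in $S$ has image contained in $S$, and (b) $\Pi_{\mathcal V}(S)\subset N$. An invariant set is an isolated invariant set if some closed set isolates it. For a full solution $\varphi$: $\operatorname{uim}^-\varphi:=\bigcap_{t\le0}\varphi((-\infty,t])$, $\operatorname{uim}^+\varphi:=\bigcap_{t\ge0}\varphi([t,\infty))$; the $\mathcal V$-hull $\langle A\rangle_{\mathcal V}$ is the intersection of all $\mathcal V$-compatible locally closed sets containing $A$; $\alpha(\varphi):=\langle\operatorname{uim}^-\varphi\rangle_{\mathcal V}$, $\omega(\varphi):=\langle\operatorname{uim}^+\varphi\rangle_{\mathcal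 V}$. For invariant $X$ and a finite poset $(\mathbb P,\le)$, a family $\mathcal M=\{M_p\mid p\in\mathbb P\}$ is a Morse decomposition of $X$ if (i) the $M_p$ are mutually disjoint isolated invariant subsets of $X$, and (ii) for every essential full solution $\varphi$ in $X$ either $\operatorname{im}\varphi\subset M_r$ for some $r\in\mathbb P$, or there exist $p,q\in\mathbb P$ with $q>p$, $\alpha(\varphi)\subset M_q$ and $\omega(\varphi)\subset M_p$. The same definitions apply to an invariant locally closed subset $M$ in place of $X$ with the induced field $\mathcal V_M$. *)

theory Defs
  imports "HOL-Analysis.Analysis" "HOL-Homology.Homology"
begin

definition cl :: "'a topology \<Rightarrow> 'a set \<Rightarrow> 'a set" where
  "cl X A = X closure_of A"

definition mo :: "'a topology \<Rightarrow> 'a set \<Rightarrow> 'a set" where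
  "mo X A = cl X A - A"

definition locally_closed :: "'a topology \<Rightarrow> 'a set \<Rightarrow> bool" where
  "locally_closed X A \<longleftrightarrow> (\<exists>U C. openin X U \<and> closedin X C \<and> A = U \<inter> C)"

definition multivector :: "'a topology \<Rightarrow> 'a set \<Rightarrow> bool" where
  "multivector X A \<longleftrightarrow> A \<noteq> {} \<and> locally_closed X A"

definition multivector_field :: "'a topology \<Rightarrow> 'a set set \<Rightarrow> bool" where
  "multivector_field X V \<longleftrightarrow>
     (\<forall>W\<in>V. multivector X W) \<and> \<Union>V = topspace X \<and>
     (\<forall>W1\<in>V. \<forall>W2\<in>V. W1 \<noteq> W2 \<longrightarrow> W1 \<inter> W2 = {})"

definition cell :: "'a set set \<Rightarrow> 'a \<Rightarrow> 'a set" where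
  "cell V x = (THE W. W \<in> V \<and> x \<in> W)"

definition critical :: "'a topology \<Rightarrow> 'a set \<Rightarrow> bool" where
  "critical X W \<longleftrightarrow>
     (\<exists>p. \<not> trivial_group (relative_homology_group p (subtopology X (cl X W)) (mo X W)))"

definition compatible :: "'a topology \<Rightarrow> 'a set set \<Rightarrow> 'a set \<Rightarrow> bool" where
  "compatible X V A \<longleftrightarrow> (\<forall>x\<in>topspace X. cell V x \<inter> A = {} \<or> cell V x \<subseteq> A)"

definition Pi_V :: "'a topology \<Rightarrow> 'a set set \<Rightarrow> 'a \<Rightarrow> 'a set" where
  "Pi_V X V x = cell V x \<union> cl X {x}"

definition Pi_Vset :: "'a topology \<Rightarrow> 'a set set \<Rightarrow> 'a set \<Rightarrow> 'a set" where
  "Pi_Vset X V A = (\<Union>x\<in>A. Pi_V X V x)"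

definition GV :: "'a topology \<Rightarrow> 'a set set \<Rightarrow> ('a \<times> 'a) set" where
  "GV X V = {(x, y). x \<in> topspace X \<and> y \<in> Pi_V X V x}"

definition scc :: "'a topology \<Rightarrow> 'a set set \<Rightarrow> 'a set set" where
  "scc X V = (\<lambda>x. {y \<in> topspace X. (x, y) \<in> (GV X V)\<^sup>* \<and> (y, x) \<in> (GV X V)\<^sup>*}) ` topspace X"

definition vpath :: "'a topology \<Rightarrow> 'a set set \<Rightarrow> 'a set \<Rightarrow> (int \<Rightarrow> 'a) \<Rightarrow> int \<Rightarrow> int \<Rightarrow> bool" where
  "vpath X V A \<phi> a b \<longleftrightarrow> a \<le> b \<and> (\<forall>i\<in>{a..b}. \<phi> i \<in> A) \<and>
     (\<forall>i. a \<le> i \<and> i < b \<longrightarrow> \<phi> (i + 1) \<in> Pi_V X V (\<phi> i))"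

definition full_solution :: "'a topology \<Rightarrow> 'a set set \<Rightarrow> 'a set \<Rightarrow> (int \<Rightarrow> 'a) \<Rightarrow> bool" where
  "full_solution X V A \<phi> \<longleftrightarrow> (\<forall>i. \<phi> i \<in> A \<and> \<phi> (i + 1) \<in> Pi_V X V (\<phi> i))"

definition essential :: "'a topology \<Rightarrow> 'a set set \<Rightarrow> (int \<Rightarrow> 'a) \<Rightarrow> bool" where
  "essential X V \<phi> \<longleftrightarrow>
     (\<forall>t. \<not> critical X (cell V (\<phi> t)) \<longrightarrow>
        (\<forall>n. \<exists>s\<le>n. \<phi> s \<notin> cell V (\<phi> t)) \<and> (\<forall>n. \<exists>s\<ge>n. \<phi> s \<notin> cell V (\<phi> t)))"

definition ess_solution :: "'a topology \<Rightarrow> 'a set set \<Rightarrow> 'a set \<Rightarrow> (int \<Rightarrow> 'a) \<Rightarrow> bool" where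
  "ess_solution X V A \<phi> \<longleftrightarrow> full_solution X V A \<phi> \<and> essential X V \<phi>"

definition Inv :: "'a topology \<Rightarrow> 'a set set \<Rightarrow> 'a set \<Rightarrow> 'a set" where
  "Inv X V A = {x \<in> A. \<exists>\<phi>. ess_solution X V A \<phi> \<and> \<phi> 0 = x}"

definition invariant :: "'a topology \<Rightarrow> 'a set set \<Rightarrow> 'a set \<Rightarrow> bool" where
  "invariant X V A \<longleftrightarrow> Inv X V A = A"

definition isolates :: "'a topology \<Rightarrow> 'a set set \<Rightarrow> 'a set \<Rightarrow> 'a set \<Rightarrow> bool" where
  "isolates X V N S \<longleftrightarrow> closedin X N \<and> S \<subseteq> N \<and>
     (\<forall>\<phi> a b. vpath X V N \<phi> a b \<and> \<phi> a \<in> S \<and> \<phi> b \<in> S \<longrightarrow> \<phi> ` {a..b} \<subseteq> S) \<and>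
     Pi_Vset X V S \<subseteq> N"

definition isolated_invariant :: "'a topology \<Rightarrow> 'a set set \<Rightarrow> 'a set \<Rightarrow> bool" where
  "isolated_invariant X V S \<longleftrightarrow> invariant X V S \<and> (\<exists>N. isolates X V N S)"

definition uim_minus :: "(int \<Rightarrow> 'a) \<Rightarrow> 'a set" where
  "uim_minus \<phi> = (\<Inter>t\<in>{..0}. \<phi> ` {..t})"

definition uim_plus :: "(int \<Rightarrow> 'a) \<Rightarrow> 'a set" where
  "uim_plus \<phi> = (\<Inter>t\<in>{0..}. \<phi> ` {t..})"

definition vhull :: "'a topology \<Rightarrow> 'a set set \<Rightarrow> 'a set \<Rightarrow> 'a set" where
  "vhull X V A = \<Inter>{B. B \<subseteq> topspace X \<and> compatible X V B \<and> locally_closed X B \<and> A \<subseteq> B}"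

definition alpha_lim :: "'a topology \<Rightarrow> 'a set set \<Rightarrow> (int \<Rightarrow> 'a) \<Rightarrow> 'a set" where
  "alpha_lim X V \<phi> = vhull X V (uim_minus \<phi>)"

definition omega_lim :: "'a topology \<Rightarrow> 'a set set \<Rightarrow> (int \<Rightarrow> 'a) \<Rightarrow> 'a set" where
  "omega_lim X V \<phi> = vhull X V (uim_plus \<phi>)"

definition morse_decomposition ::
  "'a topology \<Rightarrow> 'a set set \<Rightarrow> 'p set \<Rightarrow> ('p \<Rightarrow> 'p \<Rightarrow> bool) \<Rightarrow> ('p \<Rightarrow> 'a set) \<Rightarrow> bool" where
  "morse_decomposition X V P leq M \<longleftrightarrow>
     finite P \<and> partial_order_on P {(p, q). p \<in> P \<and> q \<in> P \<and> leq p q} \<and>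
     (\<forall>p\<in>P. M p \<subseteq> topspace X \<and> isolated_invariant X V (M p)) \<and>
     (\<forall>p\<in>P. \<forall>q\<in>P. p \<noteq> q \<longrightarrow> M p \<inter> M q = {}) \<and>
     (\<forall>\<phi>. ess_solution X V (topspace X) \<phi> \<longrightarrow>
        (\<exists>r\<in>P. range \<phi> \<subseteq> M r) \<or>
        (\<exists>p\<in>P. \<exists>q\<in>P. leq p q \<and> q \<noteq> p \<and> alpha_lim X V \<phi> \<subseteq> M q \<and> omega_lim X V \<phi> \<subseteq> M p))"

definition induced_field :: "'a set set \<Rightarrow> 'a set \<Rightarrow> 'a set set" where
  "induced_field V M = {W \<in> V. W \<subseteq> M}"

end

theory Submission
  imports Defs
begin

text \<open>
  An essential full solution returns infinitely often, in the past and in the future, to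
  some points; all such points lie in one strongly connected component of G_V for the past
  and one for the future. Strongly connected components are V-compatible and locally closed,
  so they contain the alpha- and omega-limit sets. Essentiality forces every multivector
  containing such a component to be critical, and conversely a component with this property
  carries an essential periodic solution visiting all its points. Such components are
  therefore invariant; they are isolated by X itself because paths between their points stay
  inside, and reachability between distinct components is a partial order.
  For minimality, the periodic solution through a component M is essential also for the
  field induced on M (M is critical in itself since H_0(M) is nontrivial), and its point at
  time 0 lies in both of its limit sets, so every Morse decomposition of M puts all of M
  into a single Morse set.
\<close>

lemma cell_eqI:
  assumes "multivector_field X V" and "W \<in> V" and "x \<in> W"
  shows "cell V x = W"
  unfolding cell_def
proof (rule the_equality)
  show "W \<in> V \<and> x \<in> W" using assms by blast
  fix W' assume "W' \<in> V \<and> x \<in> W'"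
  then show "W' = W" using assms unfolding multivector_field_def by blast
qed

lemma cell_in_field:
  assumes "multivector_field X V" and "x \<in> topspace X"
  shows "cell V x \<in> V"
proof -
  obtain W where "W \<in> V" "x \<in> W" using assms unfolding multivector_field_def by blast
  then show ?thesis using cell_eqI[OF assms(1)] by simp
qed

lemma mem_cell:
  assumes "multivector_field X V" and "x \<in> topspace X"
  shows "x \<in> cell V x"
proof -
  obtain W where "W \<in> V" "x \<in> W" using assms unfolding multivector_field_def by blast
  then show ?thesis using cell_eqI[OF assms(1)] by simp
qed

lemma cell_subset_topspace:
  assumes "multivector_field X V" and "x \<in> topspace X"
  shows "cell V x \<subseteq> topspace X"
  using cell_in_field[OF assms] assms(1) unfolding multivector_field_def by blast

lemma Pi_V_subset_topspace:
  assumes "multivector_field X V" and "x \<in> topspace X"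
  shows "Pi_V X V x \<subseteq> topspace X"
  using cell_subset_topspace[OF assms] by (simp add: Pi_V_def cl_def closure_of_subset_topspace)

lemma mem_Pi_V_self:
  "multivector_field X V \<Longrightarrow> x \<in> topspace X \<Longrightarrow> x \<in> Pi_V X V x"
  by (simp add: Pi_V_def mem_cell)

lemma GV_subset_topspace:
  assumes "multivector_field X V"
  shows "GV X V \<subseteq> topspace X \<times> topspace X"
  using Pi_V_subset_topspace[OF assms] unfolding GV_def by blast

lemma rtrancl_GV_topspace:
  assumes "multivector_field X V" and "(x, y) \<in> (GV X V)\<^sup>*" and "x \<in> topspace X"
  shows "y \<in> topspace X"
  using assms(2,3) by (induction rule: rtrancl_induct) (use GV_subset_topspace[OF assms(1)] in auto)

lemma cell_induced_field:
  assumes "multivector_field X V" and "compatible X V S" and "S \<subseteq> topspace X" and "x \<in> S"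
  shows "cell (induced_field V S) x = cell V x"
proof -
  have x: "x \<in> topspace X" using assms(3,4) by blast
  have "cell V x \<subseteq> S"
    using assms(2,4) x mem_cell[OF assms(1) x] unfolding compatible_def by blast
  show ?thesis
    unfolding cell_def[of "induced_field V S"]
  proof (rule the_equality)
    show "cell V x \<in> induced_field V S \<and> x \<in> cell V x"
      using \<open>cell V x \<subseteq> S\<close> cell_in_field[OF assms(1) x] mem_cell[OF assms(1) x] unfolding induced_field_def by blast
    fix W assume "W \<in> induced_field V S \<and> x \<in> W"
    then show "W = cell V x" using cell_eqI[OF assms(1)] unfolding induced_field_def by blast
  qed
qed

lemma Pi_V_induced_field:
  assumes "multivector_field X V" and "compatible X V S" and "S \<subseteq> topspace X" and "x \<in> S"
  shows "Pi_V (subtopology X S) (induced_field V S) x = S \<inter> Pi_V X V x"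
proof -
  have x: "x \<in> topspace X" using assms(3,4) by blast
  have "cell V x \<subseteq> S"
    using assms(2) x mem_cell[OF assms(1) x] assms(4) unfolding compatible_def by blast
  moreover have "subtopology X S closure_of {x} = S \<inter> X closure_of {x}"
    using closure_of_subtopology_open[of X S "{x}"] assms(4) by simp
  ultimately show ?thesis
    unfolding Pi_V_def cl_def cell_induced_field[OF assms] by blast
qed

section \<open>Strongly connected components of the digraph G_V\<close>

definition scc_of :: "'a topology \<Rightarrow> 'a set set \<Rightarrow> 'a \<Rightarrow> 'a set" where
  "scc_of X V x = {y \<in> topspace X. (x, y) \<in> (GV X V)\<^sup>* \<and> (y, x) \<in> (GV X V)\<^sup>*}"

lemma scc_eq_image_scc_of: "scc X V = scc_of X V ` topspace X"
  by (simp add: scc_def scc_of_def)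

lemma scc_of_in_scc: "x \<in> topspace X \<Longrightarrow> scc_of X V x \<in> scc X V"
  by (simp add: scc_eq_image_scc_of)

lemma mem_scc_of_self: "x \<in> topspace X \<Longrightarrow> x \<in> scc_of X V x"
  by (simp add: scc_of_def)

lemma scc_subset_topspace: "S \<in> scc X V \<Longrightarrow> S \<subseteq> topspace X"
  by (auto simp: scc_eq_image_scc_of scc_of_def)

lemma scc_nonempty: "S \<in> scc X V \<Longrightarrow> S \<noteq> {}"
  by (auto simp: scc_eq_image_scc_of dest: mem_scc_of_self)

lemma scc_eq_scc_of:
  assumes "S \<in> scc X V" and "x \<in> S"
  shows "S = scc_of X V x"
proof -
  obtain x0 where "S = scc_of X V x0"
    using assms(1) by (auto simp: scc_eq_image_scc_of)
  with assms(2) have "(x0, x) \<in> (GV X V)\<^sup>*" "(x, x0) \<in> (GV X V)\<^sup>*"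
    unfolding scc_of_def by blast+
  then show ?thesis
    unfolding \<open>S = scc_of X V x0\<close> scc_of_def by (meson rtrancl_trans)
qed

lemma scc_disjoint:
  "S \<in> scc X V \<Longrightarrow> S' \<in> scc X V \<Longrightarrow> x \<in> S \<Longrightarrow> x \<in> S' \<Longrightarrow> S = S'"
  using scc_eq_scc_of[of S X V x] scc_eq_scc_of[of S' X V x] by simp

lemma scc_reach:
  assumes "S \<in> scc X V" and "x \<in> S" and "y \<in> S"
  shows "(x, y) \<in> (GV X V)\<^sup>*"
  using assms(3) unfolding scc_eq_scc_of[OF assms(1,2)] scc_of_def by blast

lemma scc_memI:
  assumes "S \<in> scc X V" and "x \<in> S" and "y \<in> topspace X"
    and "(x, y) \<in> (GV X V)\<^sup>*" and "(y, x) \<in> (GV X V)\<^sup>*"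
  shows "y \<in> S"
  using assms(3-) unfolding scc_eq_scc_of[OF assms(1,2)] scc_of_def by blast

lemma scc_convex:
  assumes "multivector_field X V" and "S \<in> scc X V" and "x \<in> S" and "z \<in> S"
    and "(x, y) \<in> (GV X V)\<^sup>*" and "(y, z) \<in> (GV X V)\<^sup>*"
  shows "y \<in> S"
proof (rule scc_memI[OF assms(2,3)])
  show "y \<in> topspace X"
    using rtrancl_GV_topspace[OF assms(1,5)] assms(2,3) scc_subset_topspace by blast
  show "(y, x) \<in> (GV X V)\<^sup>*"
    using assms(6) scc_reach[OF assms(2,4,3)] by (rule rtrancl_trans)
qed fact

lemma cell_subset_scc:
  assumes "multivector_field X V" and "S \<in> scc X V" and "x \<in> S"
  shows "cell V x \<subseteq> S"
proof
  fix y assume y: "y \<in> cell V x"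
  have x: "x \<in> topspace X" using assms(2,3) scc_subset_topspace by blast
  have y_top: "y \<in> topspace X" using cell_subset_topspace[OF assms(1) x] y by blast
  have "cell V y = cell V x" using cell_eqI[OF assms(1) cell_in_field[OF assms(1) x] y] .
  then have "(y, x) \<in> GV X V"
    using y_top mem_cell[OF assms(1) x] unfolding GV_def Pi_V_def by auto
  moreover have "(x, y) \<in> GV X V" using x y unfolding GV_def Pi_V_def by blast
  ultimately show "y \<in> S" using scc_memI[OF assms(2,3) y_top] by blast
qed

lemma compatible_scc:
  assumes "multivector_field X V" and "S \<in> scc X V"
  shows "compatible X V S"
  unfolding compatible_def
proof (intro ballI)
  fix x assume x: "x \<in> topspace X"
  show "cell V x \<inter> S = {} \<or> cell V x \<subseteq> S"
  proof (cases "cell V x \<inter> S = {}")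
    case False
    then obtain z where z: "z \<in> cell V x" "z \<in> S" by blast
    have "cell V z = cell V x"
      using cell_eqI[OF assms(1) cell_in_field[OF assms(1) x] z(1)] .
    then show ?thesis using cell_subset_scc[OF assms z(2)] by simp
  qed simp
qed

lemma scc_rtrancl_Restr:
  assumes "multivector_field X V" and "S \<in> scc X V" and "x \<in> S" and "y \<in> S"
  shows "(x, y) \<in> (Restr (GV X V) S)\<^sup>*"
proof -
  have "(z, y) \<in> (GV X V)\<^sup>* \<longrightarrow> (x, z) \<in> (Restr (GV X V) S)\<^sup>*"
    if "(x, z) \<in> (GV X V)\<^sup>*" for z
    using that
  proof (induction rule: rtrancl_induct)
    case (step z w)
    show ?case
    proof
      assume wy: "(w, y) \<in> (GV X V)\<^sup>*"
      have zy: "(z, y) \<in> (GV X V)\<^sup>*" using step(2) wy by (rule converse_rtrancl_into_rtrancl)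
      have "z \<in> S" using scc_convex[OF assms step(1) zy] .
      moreover have "w \<in> S"
        using scc_convex[OF assms rtrancl_into_rtrancl[OF step(1,2)] wy] .
      ultimately show "(x, w) \<in> (Restr (GV X V) S)\<^sup>*"
        using step zy by (meson IntI mem_Sigma_iff rtrancl.rtrancl_into_rtrancl)
    qed
  qed simp
  then show ?thesis using scc_reach[OF assms(2-4)] by blast
qed

lemma closure_of_finite_pointE:
  assumes "finite A" and "y \<in> X closure_of A"
  obtains a where "a \<in> A" and "y \<in> X closure_of {a}"
proof -
  have "X closure_of A = (\<Union>a\<in>A. X closure_of {a})"
    using closure_of_Union[of "(\<lambda>a. {a}) ` A" X] assms(1) by simp
  then show ?thesis using assms(2) that by blast
qed

lemma closedin_closure_of_scc_diff:
  assumes "multivector_field X V" and "finite (topspace X)" and S: "S \<in> scc X V"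
  shows "closedin X (X closure_of S - S)"
proof -
  have Stop: "S \<subseteq> topspace X" using scc_subset_topspace[OF S] .
  have edge: "(x, y) \<in> GV X V" if "x \<in> topspace X" "y \<in> X closure_of {x}" for x y
    using that unfolding GV_def Pi_V_def cl_def by blast
  have finite: "finite A" if "A \<subseteq> topspace X" for A
    using assms(2) that by (rule rev_finite_subset)
  define C where "C = X closure_of S"
  have Ctop: "C - S \<subseteq> topspace X" unfolding C_def using closure_of_subset_topspace[of X S] by blast
  have "X closure_of (C - S) \<subseteq> C - S"
  proof
    fix y assume y: "y \<in> X closure_of (C - S)"
    then obtain z where z: "z \<in> C - S" "y \<in> X closure_of {z}"
      using closure_of_finite_pointE[OF finite[OF Ctop] y] by blast
    then have "z \<in> X closure_of S" unfolding C_def by blast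
    then obtain x where x: "x \<in> S" "z \<in> X closure_of {x}"
      by (rule closure_of_finite_pointE[OF finite[OF Stop]])
    have xt: "x \<in> topspace X" and zt: "z \<in> topspace X" using x(1) z(1) Stop Ctop by auto
    have "X closure_of {z} \<subseteq> X closure_of {x}"
      using closure_of_minimal[of "{z}" "X closure_of {x}" X] x(2) by simp
    then have yx: "y \<in> X closure_of {x}" using z(2) by blast
    have "X closure_of {x} \<subseteq> C"
      unfolding C_def using x(1) by (intro closure_of_mono) simp
    with yx have "y \<in> C" by blast
    moreover have "y \<notin> S"
    proof
      (* z -> y ->* x -> z would put z into S *)
      assume "y \<in> S"
      have "(z, x) \<in> (GV X V)\<^sup>*"
        using edge[OF zt z(2)] scc_reach[OF S \<open>y \<in> S\<close> x(1)] by (rule converse_rtrancl_into_rtrancl)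
      then have "z \<in> S" using scc_memI[OF S x(1) zt r_into_rtrancl[OF edge[OF xt x(2)]]] by simp
      then show False using z(1) by simp
    qed
    ultimately show "y \<in> C - S" by simp
  qed
  then show ?thesis using Ctop closure_of_subset_eq unfolding C_def by blast
qed

lemma locally_closed_scc:
  assumes "multivector_field X V" and "finite (topspace X)" and S: "S \<in> scc X V"
  shows "locally_closed X S"
proof -
  let ?C = "X closure_of S"
  have "openin X (topspace X - (?C - S))" using closedin_closure_of_scc_diff[OF assms] by blast
  moreover have "S = (topspace X - (?C - S)) \<inter> ?C"
    using closure_of_subset[OF scc_subset_topspace[OF S]] closure_of_subset_topspace[of X S] by blast
  ultimately show ?thesis unfolding locally_closed_def using closedin_closure_of by blast
qed

lemma subset_vhull: "A \<subseteq> vhull X V A"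
  unfolding vhull_def by blast

lemma vhull_subset_scc:
  assumes "multivector_field X V" and "finite (topspace X)" and S: "S \<in> scc X V" and "A \<subseteq> S"
  shows "vhull X V A \<subseteq> S"
  using scc_subset_topspace[OF S] compatible_scc[OF assms(1) S] locally_closed_scc[OF assms(1,2) S]
    assms(4) unfolding vhull_def by blast

section \<open>Paths, walks and periodic solutions\<close>

lemma full_solution_vpath:
  "full_solution X V A \<phi> \<Longrightarrow> a \<le> b \<Longrightarrow> vpath X V A \<phi> a b"
  unfolding full_solution_def vpath_def by blast

lemma vpath_rtrancl:
  assumes "vpath X V (topspace X) \<phi> a b" and "a \<le> i" and "i \<le> j" and "j \<le> b"
  shows "(\<phi> i, \<phi> j) \<in> (GV X V)\<^sup>*"
  using assms(3,4)
proof (induction j rule: int_ge_induct)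
  case (step k)
  have "(\<phi> k, \<phi> (k + 1)) \<in> GV X V"
    using assms(1,2) step(1,3) unfolding vpath_def GV_def by auto
  moreover have "(\<phi> i, \<phi> k) \<in> (GV X V)\<^sup>*" using step by simp
  ultimately show ?case by simp
qed simp

lemma full_solution_rtrancl:
  "full_solution X V (topspace X) \<phi> \<Longrightarrow> s \<le> t \<Longrightarrow> (\<phi> s, \<phi> t) \<in> (GV X V)\<^sup>*"
  using vpath_rtrancl full_solution_vpath by (metis order.refl)

definition walk :: "('a \<times> 'a) set \<Rightarrow> (nat \<Rightarrow> 'a) \<Rightarrow> nat \<Rightarrow> bool" where
  "walk R w n \<longleftrightarrow> (\<forall>i<n. (w i, w (Suc i)) \<in> R)"

lemma walk_of_rtrancl:
  assumes "(x, y) \<in> R\<^sup>*"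
  obtains w n where "w 0 = x" and "w n = y" and "walk R w n"
proof -
  obtain n where "(x, y) \<in> R ^^ n" using rtrancl_imp_relpow[OF assms] by blast
  then show ?thesis using that unfolding relpow_fun_conv walk_def by blast
qed

lemma walk_append:
  assumes "walk R w m" and "walk R v k" and "w m = v 0"
  shows "walk R (\<lambda>i. if i \<le> m then w i else v (i - m)) (m + k)"
  unfolding walk_def
proof (intro allI impI)
  fix i assume i: "i < m + k"
  consider "Suc i \<le> m" | "i = m" | "m < i" by linarith
  then show "((if i \<le> m then w i else v (i - m)), (if Suc i \<le> m then w (Suc i) else v (Suc i - m))) \<in> R"
  proof cases
    case 1
    then show ?thesis using assms(1) by (simp add: walk_def)
  next
    case 2
    then have "(v 0, v (Suc 0)) \<in> R" using assms(2) i by (simp add: walk_def)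
    then show ?thesis using 2 assms(3) by simp
  next
    case 3
    then have "(v (i - m), v (Suc (i - m))) \<in> R" using assms(2) i by (simp add: walk_def)
    then show ?thesis using 3 by (simp add: Suc_diff_le)
  qed
qed

lemma walk_mem:
  assumes "walk R w n" and "R \<subseteq> S \<times> S" and "w 0 \<in> S" and "i \<le> n"
  shows "w i \<in> S"
proof (cases i)
  case (Suc j)
  then have "(w j, w i) \<in> R" using assms(1,4) unfolding walk_def by simp
  then show ?thesis using assms(2) by blast
qed (use assms(3) in simp)

lemma rtrancl_vpath:
  assumes "multivector_field X V" and "x \<in> topspace X" and "(x, y) \<in> (GV X V)\<^sup>*"
  obtains \<phi> a b where "vpath X V (topspace X) \<phi> a b" and "\<phi> a = x" and "\<phi> b = y"
proof -
  obtain w n where w: "w 0 = x" "w n = y" "walk (GV X V) w n"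
    using assms(3) by (rule walk_of_rtrancl)
  have "vpath X V (topspace X) (\<lambda>i. w (nat i)) 0 (int n)"
    unfolding vpath_def
  proof (intro conjI ballI allI impI)
    fix i assume "i \<in> {0..int n}"
    then show "w (nat i) \<in> topspace X"
      using walk_mem[OF w(3) GV_subset_topspace[OF assms(1)]] w(1) assms(2) by auto
  next
    fix i :: int assume "0 \<le> i \<and> i < int n"
    then show "w (nat (i + 1)) \<in> Pi_V X V (w (nat i))"
      using w(3) unfolding walk_def GV_def by (auto simp: nat_add_distrib)
  qed simp
  then show ?thesis using that w by simp
qed

lemma ex_vpath_iff_rtrancl:
  assumes "multivector_field X V" and "A \<subseteq> topspace X"
  shows "(\<exists>\<phi> a b. vpath X V (topspace X) \<phi> a b \<and> \<phi> a \<in> A \<and> \<phi> b \<in> B) \<longleftrightarrow>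
    (\<exists>x\<in>A. \<exists>y\<in>B. (x, y) \<in> (GV X V)\<^sup>*)"
proof
  assume "\<exists>\<phi> a b. vpath X V (topspace X) \<phi> a b \<and> \<phi> a \<in> A \<and> \<phi> b \<in> B"
  then obtain \<phi> a b where "vpath X V (topspace X) \<phi> a b" "\<phi> a \<in> A" "\<phi> b \<in> B" by blast
  moreover from this(1) have "(\<phi> a, \<phi> b) \<in> (GV X V)\<^sup>*"
    using vpath_rtrancl unfolding vpath_def by blast
  ultimately show "\<exists>x\<in>A. \<exists>y\<in>B. (x, y) \<in> (GV X V)\<^sup>*" by blast
next
  assume "\<exists>x\<in>A. \<exists>y\<in>B. (x, y) \<in> (GV X V)\<^sup>*"
  then obtain x y where "x \<in> A" "y \<in> B" "(x, y) \<in> (GV X V)\<^sup>*" by blast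
  with assms show "\<exists>\<phi> a b. vpath X V (topspace X) \<phi> a b \<and> \<phi> a \<in> A \<and> \<phi> b \<in> B"
    by (metis rtrancl_vpath subsetD)
qed

lemma walk_through:
  assumes "finite F" and "F \<subseteq> S" and "x0 \<in> S" and "z \<in> S"
    and conn: "\<forall>x\<in>S. \<forall>y\<in>S. (x, y) \<in> R\<^sup>*"
  shows "\<exists>w n. w 0 = x0 \<and> w n = z \<and> walk R w n \<and> F \<subseteq> w ` {0..n}"
  using assms(1,2,4)
proof (induction F arbitrary: z rule: finite_induct)
  case empty
  have "(x0, z) \<in> R\<^sup>*" using conn assms(3) empty.prems by blast
  then obtain w n where "w 0 = x0" "w n = z" "walk R w n" by (rule walk_of_rtrancl)
  then show ?case by blast
next
  case (insert y F)
  obtain w n where w: "w 0 = x0" "w n = y" "walk R w n" "F \<subseteq> w ` {0..n}"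
    using insert.IH insert.prems by blast
  have "(y, z) \<in> R\<^sup>*" using conn insert.prems by blast
  then obtain v k where v: "v 0 = y" "v k = z" "walk R v k" by (rule walk_of_rtrancl)
  let ?u = "\<lambda>i. if i \<le> n then w i else v (i - n)"
  have "?u (n + k) = z" using v w by (cases "k = 0") auto
  moreover have "w ` {0..n} \<subseteq> ?u ` {0..n + k}" by force
  ultimately show ?case
    using walk_append[OF w(3) v(3)] w v by (intro exI[of _ ?u] exI[of _ "n + k"]) auto
qed

lemma walk_mod_step:
  assumes "walk R w n" and "(w n, w 0) \<in> R"
  shows "(w (nat (t mod (int n + 1))), w (nat ((t + 1) mod (int n + 1)))) \<in> R"
proof -
  let ?L = "int n + 1"
  have succ: "(t + 1) mod ?L = (t mod ?L + 1) mod ?L" by (simp add: mod_add_left_eq)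
  have nonneg: "0 \<le> t mod ?L" by (rule pos_mod_sign) simp
  moreover have "t mod ?L < ?L" by (rule pos_mod_bound) simp
  ultimately consider "t mod ?L = int n" | "t mod ?L + 1 < ?L" by linarith
  then show ?thesis
  proof cases
    case 1
    then have "(t + 1) mod ?L = 0" using succ by simp
    then show ?thesis using 1 assms(2) by simp
  next
    case 2
    then have "(t + 1) mod ?L = t mod ?L + 1" using succ nonneg by simp
    then have "nat ((t + 1) mod ?L) = Suc (nat (t mod ?L))" using nonneg by (simp add: nat_add_distrib)
    moreover have "nat (t mod ?L) < n" using 2 nonneg by (simp add: nat_less_iff)
    ultimately show ?thesis using assms(1) unfolding walk_def by simp
  qed
qed

lemma periodic_walk:
  assumes "finite S" and "x0 \<in> S" and conn: "\<forall>x\<in>S. \<forall>y\<in>S. (x, y) \<in> R\<^sup>*"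
    and "R \<subseteq> S \<times> S" and "(x0, x0) \<in> R"
  obtains \<psi> :: "int \<Rightarrow> 'a" and L :: int
  where "L > 0" and "\<And>t k. \<psi> (t + k * L) = \<psi> t" and "\<psi> 0 = x0" and "range \<psi> = S"
    and "\<And>t. (\<psi> t, \<psi> (t + 1)) \<in> R"
proof -
  obtain w n where w: "w 0 = x0" "w n = x0" "walk R w n" "S \<subseteq> w ` {0..n}"
    using walk_through[OF assms(1) order.refl assms(2,2) conn] by blast
  define L where "L = int n + 1"
  define \<psi> where "\<psi> t = w (nat (t mod L))" for t
  have L: "L > 0" unfolding L_def by simp
  have mod_le: "nat (t mod L) \<le> n" for t
    using pos_mod_bound[OF L, of t] unfolding L_def by linarith
  have start: "\<psi> 0 = x0" unfolding \<psi>_def using w(1) by simp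
  have periodic: "\<psi> (t + k * L) = \<psi> t" for t k unfolding \<psi>_def by simp
  have range: "range \<psi> = S"
  proof
    show "range \<psi> \<subseteq> S"
      unfolding \<psi>_def using walk_mem[OF w(3) assms(4) _ mod_le] w(1) assms(2) by auto
    show "S \<subseteq> range \<psi>"
    proof
      fix z assume "z \<in> S"
      then obtain i where i: "i \<le> n" "z = w i" using w(4) by auto
      then have "\<psi> (int i) = z" unfolding \<psi>_def L_def by simp
      then show "z \<in> range \<psi>" by (metis rangeI)
    qed
  qed
  have step: "(\<psi> t, \<psi> (t + 1)) \<in> R" for t
    unfolding \<psi>_def L_def using walk_mod_step[OF w(3)] w(1,2) assms(5) by simp
  show ?thesis by (rule that[OF L periodic start range step])
qed

lemma uim_minus_iff: "x \<in> uim_minus \<phi> \<longleftrightarrow> (\<forall>n. \<exists>s\<le>n. \<phi> s = x)"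
proof
  assume "x \<in> uim_minus \<phi>"
  then have *: "\<exists>s\<le>t. \<phi> s = x" if "t \<le> 0" for t using that unfolding uim_minus_def by auto
  show "\<forall>n. \<exists>s\<le>n. \<phi> s = x"
  proof
    fix n :: int
    obtain s where "s \<le> min n 0" "\<phi> s = x" using *[of "min n 0"] by auto
    then show "\<exists>s\<le>n. \<phi> s = x" by auto
  qed
qed (auto simp: uim_minus_def)

lemma uim_plus_iff: "x \<in> uim_plus \<phi> \<longleftrightarrow> (\<forall>n. \<exists>s\<ge>n. \<phi> s = x)"
proof
  assume "x \<in> uim_plus \<phi>"
  then have *: "\<exists>s\<ge>t. \<phi> s = x" if "t \<ge> 0" for t using that unfolding uim_plus_def by auto
  show "\<forall>n. \<exists>s\<ge>n. \<phi> s = x"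
  proof
    fix n :: int
    obtain s where "s \<ge> max n 0" "\<phi> s = x" using *[of "max n 0"] by auto
    then show "\<exists>s\<ge>n. \<phi> s = x" by auto
  qed
qed (auto simp: uim_plus_def)

lemma uim_plus_reflect: "uim_plus \<phi> = uim_minus (\<lambda>s. \<phi> (- s))"
proof -
  have *: "(\<exists>s\<ge>n. \<phi> s = x) \<longleftrightarrow> (\<exists>s\<le>- n. \<phi> (- s) = x)" for n x
  proof
    assume "\<exists>s\<ge>n. \<phi> s = x"
    then obtain s where "s \<ge> n" "\<phi> s = x" by blast
    then show "\<exists>s\<le>- n. \<phi> (- s) = x" by (intro exI[of _ "- s"]) simp
  next
    assume "\<exists>s\<le>- n. \<phi> (- s) = x"
    then obtain s where "s \<le> - n" "\<phi> (- s) = x" by blast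
    then show "\<exists>s\<ge>n. \<phi> s = x" by (intro exI[of _ "- s"]) simp
  qed
  have "(\<forall>n. \<exists>s\<ge>n. \<phi> s = x) \<longleftrightarrow> (\<forall>n. \<exists>s\<le>n. \<phi> (- s) = x)" for x
    unfolding * by (metis minus_minus)
  then show ?thesis unfolding set_eq_iff uim_minus_iff uim_plus_iff by blast
qed

lemma periodic_mem_uim:
  assumes L: "(L::int) > 0" and per: "\<And>t k. \<psi> (t + k * L) = \<psi> t"
  shows "\<psi> t \<in> uim_minus \<psi>" and "\<psi> t \<in> uim_plus \<psi>"
proof -
  have "\<exists>s\<le>n. \<psi> s = \<psi> t" and "\<exists>s\<ge>n. \<psi> s = \<psi> t" for n
  proof -
    define K where "K = \<bar>n - t\<bar>"
    have "K \<le> K * L" using mult_left_mono[of 1 L K] L unfolding K_def by simp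
    then have "t + (- K) * L \<le> n" and "t + K * L \<ge> n" unfolding K_def by linarith+
    then show "\<exists>s\<le>n. \<psi> s = \<psi> t" and "\<exists>s\<ge>n. \<psi> s = \<psi> t" using per by blast+
  qed
  then show "\<psi> t \<in> uim_minus \<psi>" and "\<psi> t \<in> uim_plus \<psi>"
    unfolding uim_minus_iff uim_plus_iff by blast+
qed

lemma pigeonhole_uim_minus:
  assumes "finite A" and "\<forall>n. \<exists>s\<le>(n::int). \<phi> s \<in> A"
  obtains x where "x \<in> A" and "x \<in> uim_minus \<phi>"
proof (rule ccontr)
  assume "\<not> thesis"
  with that have "\<forall>x\<in>A. \<exists>n. \<forall>s\<le>n. \<phi> s \<noteq> x" unfolding uim_minus_iff by blast
  then obtain N where N: "\<forall>x\<in>A. \<forall>s\<le>N x. \<phi> s \<noteq> x" by (rule bchoice[THEN exE])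
  obtain s where s: "s \<le> Min (N ` A)" "\<phi> s \<in> A" using assms(2) by blast
  moreover have "Min (N ` A) \<le> N (\<phi> s)" using assms(1) s(2) by simp
  ultimately have "s \<le> N (\<phi> s)" by linarith
  then show False using N s(2) by blast
qed

lemma uim_minus_reaches:
  assumes "full_solution X V (topspace X) \<phi>" and "x \<in> uim_minus \<phi>"
  shows "(x, \<phi> t) \<in> (GV X V)\<^sup>*"
proof -
  obtain s where "s \<le> t" "\<phi> s = x" using assms(2) unfolding uim_minus_iff by blast
  then show ?thesis using full_solution_rtrancl[OF assms(1)] by blast
qed

lemma reaches_uim_plus:
  assumes "full_solution X V (topspace X) \<phi>" and "y \<in> uim_plus \<phi>"
  shows "(\<phi> t, y) \<in> (GV X V)\<^sup>*"
proof -
  obtain s where "s \<ge> t" "\<phi> s = y" using assms(2) unfolding uim_plus_iff by blast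
  then show ?thesis using full_solution_rtrancl[OF assms(1)] by blast
qed

lemma uim_minus_subset_scc_of:
  assumes sol: "full_solution X V (topspace X) \<phi>" and x: "x \<in> uim_minus \<phi>"
  shows "uim_minus \<phi> \<subseteq> scc_of X V x"
proof
  fix y assume y: "y \<in> uim_minus \<phi>"
  obtain s s' where "\<phi> s = y" "\<phi> s' = x" using x y unfolding uim_minus_iff by metis
  then have "(x, y) \<in> (GV X V)\<^sup>*" and "(y, x) \<in> (GV X V)\<^sup>*"
    using uim_minus_reaches[OF sol x, of s] uim_minus_reaches[OF sol y, of s'] by auto
  moreover have "y \<in> topspace X" using sol \<open>\<phi> s = y\<close> unfolding full_solution_def by blast
  ultimately show "y \<in> scc_of X V x" unfolding scc_of_def by blast
qed

lemma uim_plus_subset_scc_of: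
  assumes sol: "full_solution X V (topspace X) \<phi>" and x: "x \<in> uim_plus \<phi>"
  shows "uim_plus \<phi> \<subseteq> scc_of X V x"
proof
  fix y assume y: "y \<in> uim_plus \<phi>"
  obtain s s' where "\<phi> s = y" "\<phi> s' = x" using x y unfolding uim_plus_iff by metis
  then have "(x, y) \<in> (GV X V)\<^sup>*" and "(y, x) \<in> (GV X V)\<^sup>*"
    using reaches_uim_plus[OF sol x, of s] reaches_uim_plus[OF sol y, of s'] by auto
  moreover have "y \<in> topspace X" using sol \<open>\<phi> s = y\<close> unfolding full_solution_def by blast
  ultimately show "y \<in> scc_of X V x" unfolding scc_of_def by blast
qed

section \<open>Essential solutions and strongly connected components\<close>

lemma essential_periodicI:
  assumes L: "(L::int) > 0" and per: "\<And>t k. \<psi> (t + k * L) = \<psi> t"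
    and leaves: "\<And>t. \<not> critical X (cell V (\<psi> t)) \<Longrightarrow> \<not> range \<psi> \<subseteq> cell V (\<psi> t)"
  shows "essential X V \<psi>"
  unfolding essential_def
proof (intro allI impI)
  fix t assume "\<not> critical X (cell V (\<psi> t))"
  then obtain t0 where "\<psi> t0 \<notin> cell V (\<psi> t)" using leaves by blast
  then show "(\<forall>n. \<exists>s\<le>n. \<psi> s \<notin> cell V (\<psi> t)) \<and> (\<forall>n. \<exists>s\<ge>n. \<psi> s \<notin> cell V (\<psi> t))"
    using periodic_mem_uim[OF L per, of t0] unfolding uim_minus_iff uim_plus_iff by metis
qed

lemma essential_reflect:
  assumes "essential X V \<phi>"
  shows "essential X V (\<lambda>s. \<phi> (- s))"
  unfolding essential_def
proof (intro allI impI conjI)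
  fix t n assume "\<not> critical X (cell V (\<phi> (- t)))"
  then have leaves: "\<exists>s\<le>m. \<phi> s \<notin> cell V (\<phi> (- t))" "\<exists>s\<ge>m. \<phi> s \<notin> cell V (\<phi> (- t))" for m
    using assms unfolding essential_def by blast+
  obtain s where "s \<ge> - n" "\<phi> s \<notin> cell V (\<phi> (- t))" using leaves(2) by blast
  then show "\<exists>s\<le>n. \<phi> (- s) \<notin> cell V (\<phi> (- t))" by (intro exI[of _ "- s"]) simp
  obtain s where "s \<le> - n" "\<phi> s \<notin> cell V (\<phi> (- t))" using leaves(1) by blast
  then show "\<exists>s\<ge>n. \<phi> (- s) \<notin> cell V (\<phi> (- t))" by (intro exI[of _ "- s"]) simp
qed

lemma critical_if_essential_range_subset:
  assumes "multivector_field X V" and "essential X V \<phi>" and "W \<in> V" and "range \<phi> \<subseteq> W"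
  shows "critical X W"
proof (rule ccontr)
  assume "\<not> critical X W"
  moreover have "cell V (\<phi> 0) = W" using cell_eqI[OF assms(1,3)] assms(4) by blast
  ultimately obtain s where "\<phi> s \<notin> W" using assms(2) unfolding essential_def by blast
  with assms(4) show False by blast
qed

lemma critical_if_uim_minus_subset:
  assumes "finite (topspace X)" and "multivector_field X V"
    and "range \<phi> \<subseteq> topspace X" and "essential X V \<phi>"
    and "W \<in> V" and "x \<in> uim_minus \<phi>" and "uim_minus \<phi> \<subseteq> W"
  shows "critical X W"
proof (rule ccontr)
  assume regular: "\<not> critical X W"
  obtain t where "\<phi> t = x" using assms(6) unfolding uim_minus_iff by blast
  then have "cell V (\<phi> t) = W" using cell_eqI[OF assms(2,5)] assms(6,7) by blast
  then have "\<forall>n. \<exists>s\<le>n. \<phi> s \<in> topspace X - W"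
    using assms(3,4) regular unfolding essential_def by blast
  then obtain z where "z \<in> topspace X - W" "z \<in> uim_minus \<phi>"
    using pigeonhole_uim_minus[of "topspace X - W"] assms(1) by blast
  with assms(7) show False by blast
qed

lemma critical_if_uim_plus_subset:
  assumes "finite (topspace X)" and "multivector_field X V"
    and "range \<phi> \<subseteq> topspace X" and "essential X V \<phi>"
    and "W \<in> V" and "x \<in> uim_plus \<phi>" and "uim_plus \<phi> \<subseteq> W"
  shows "critical X W"
proof (rule critical_if_uim_minus_subset[OF assms(1,2) _ essential_reflect[OF assms(4)] assms(5)])
  show "range (\<lambda>s. \<phi> (- s)) \<subseteq> topspace X" using assms(3) by auto
  show "x \<in> uim_minus (\<lambda>s. \<phi> (- s))" "uim_minus (\<lambda>s. \<phi> (- s)) \<subseteq> W"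
    using assms(6,7) unfolding uim_plus_reflect by simp_all
qed

lemma scc_periodic_solution:
  assumes "multivector_field X V" and "finite (topspace X)" and S: "S \<in> scc X V" and "x0 \<in> S"
  obtains \<psi> :: "int \<Rightarrow> 'a" and L :: int
  where "L > 0" and "\<And>t k. \<psi> (t + k * L) = \<psi> t" and "\<psi> 0 = x0" and "range \<psi> = S"
    and "\<And>t. \<psi> (t + 1) \<in> Pi_V X V (\<psi> t)"
proof -
  let ?R = "Restr (GV X V) S"
  have Stop: "S \<subseteq> topspace X" using scc_subset_topspace[OF S] .
  have "finite S" using assms(2) Stop by (rule rev_finite_subset)
  moreover have "\<forall>x\<in>S. \<forall>y\<in>S. (x, y) \<in> ?R\<^sup>*" using scc_rtrancl_Restr[OF assms(1) S] by blast
  moreover have "(x0, x0) \<in> ?R"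
    using mem_Pi_V_self[OF assms(1)] assms(4) Stop unfolding GV_def by blast
  ultimately obtain \<psi> and L :: int where "L > 0" "\<And>t k. \<psi> (t + k * L) = \<psi> t" "\<psi> 0 = x0"
    "range \<psi> = S" "\<And>t. (\<psi> t, \<psi> (t + 1)) \<in> ?R"
    using periodic_walk[OF _ assms(4)] by blast
  moreover have "\<psi> (t + 1) \<in> Pi_V X V (\<psi> t)" if "(\<psi> t, \<psi> (t + 1)) \<in> ?R" for t
    using that unfolding GV_def by blast
  ultimately show ?thesis using that by blast
qed

definition essential_sccs :: "'a topology \<Rightarrow> 'a set set \<Rightarrow> 'a set set" where
  "essential_sccs X V = {M \<in> scc X V. \<exists>\<phi>. ess_solution X V (topspace X) \<phi> \<and> range \<phi> \<subseteq> M}"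

lemma scc_essential_solution:
  assumes mvf: "multivector_field X V" and fin: "finite (topspace X)" and S: "S \<in> scc X V"
    and "x0 \<in> S" and crit: "\<And>W. W \<in> V \<Longrightarrow> S \<subseteq> W \<Longrightarrow> critical X W"
  obtains \<psi> where "ess_solution X V S \<psi>" and "\<psi> 0 = x0" and "range \<psi> = S"
proof -
  obtain \<psi> and L :: int where L: "L > 0" and per: "\<And>t k. \<psi> (t + k * L) = \<psi> t"
    and start: "\<psi> 0 = x0" and range: "range \<psi> = S" and step: "\<And>t. \<psi> (t + 1) \<in> Pi_V X V (\<psi> t)"
    using scc_periodic_solution[OF mvf fin S assms(4)] by metis
  have "full_solution X V S \<psi>" unfolding full_solution_def using range step by auto
  moreover have "essential X V \<psi>"
  proof (rule essential_periodicI[OF L per])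
    fix t assume "\<not> critical X (cell V (\<psi> t))"
    moreover have "\<psi> t \<in> topspace X" using range scc_subset_topspace[OF S] by auto
    then have "cell V (\<psi> t) \<in> V" by (rule cell_in_field[OF mvf])
    ultimately show "\<not> range \<psi> \<subseteq> cell V (\<psi> t)" using crit range by blast
  qed
  ultimately show ?thesis using that start range unfolding ess_solution_def by blast
qed

lemma mem_essential_sccs_iff:
  assumes mvf: "multivector_field X V" and fin: "finite (topspace X)" and S: "S \<in> scc X V"
  shows "S \<in> essential_sccs X V \<longleftrightarrow> (\<forall>W\<in>V. S \<subseteq> W \<longrightarrow> critical X W)"
proof
  assume "S \<in> essential_sccs X V"
  then obtain \<phi> where "ess_solution X V (topspace X) \<phi>" "range \<phi> \<subseteq> S"
    unfolding essential_sccs_def by blast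
  then show "\<forall>W\<in>V. S \<subseteq> W \<longrightarrow> critical X W"
    using critical_if_essential_range_subset[OF mvf] unfolding ess_solution_def by blast
next
  assume "\<forall>W\<in>V. S \<subseteq> W \<longrightarrow> critical X W"
  moreover obtain x0 where "x0 \<in> S" using scc_nonempty[OF S] by blast
  ultimately obtain \<psi> where "ess_solution X V S \<psi>" "range \<psi> = S"
    using scc_essential_solution[OF mvf fin S] by metis
  then have "ess_solution X V (topspace X) \<psi>" "range \<psi> \<subseteq> S"
    using scc_subset_topspace[OF S] unfolding ess_solution_def full_solution_def by auto
  then show "S \<in> essential_sccs X V" using S unfolding essential_sccs_def by blast
qed

lemma isolated_invariant_essential_scc:
  assumes mvf: "multivector_field X V" and fin: "finite (topspace X)"
    and M: "M \<in> essential_sccs X V"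
  shows "isolated_invariant X V M"
proof -
  have S: "M \<in> scc X V" using M unfolding essential_sccs_def by blast
  have Mtop: "M \<subseteq> topspace X" using scc_subset_topspace[OF S] .
  have crit: "critical X W" if "W \<in> V" and "M \<subseteq> W" for W
    using M mem_essential_sccs_iff[OF mvf fin S] that by blast
  have "M \<subseteq> Inv X V M"
  proof
    fix x assume x: "x \<in> M"
    obtain \<psi> where "ess_solution X V M \<psi>" "\<psi> 0 = x" "range \<psi> = M"
      by (rule scc_essential_solution[OF mvf fin S x crit])
    with x show "x \<in> Inv X V M" unfolding Inv_def by blast
  qed
  then have "invariant X V M" unfolding invariant_def Inv_def by blast
  moreover have "isolates X V (topspace X) M"
    unfolding isolates_def
  proof (intro conjI allI impI)
    fix \<phi> a b assume path: "vpath X V (topspace X) \<phi> a b \<and> \<phi> a \<in> M \<and> \<phi> b \<in> M"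
    show "\<phi> ` {a..b} \<subseteq> M"
    proof
      fix z assume "z \<in> \<phi> ` {a..b}"
      then obtain i where "a \<le> i" "i \<le> b" "z = \<phi> i" by auto
      then show "z \<in> M"
        using scc_convex[OF mvf S] path vpath_rtrancl[of X V \<phi> a b] by blast
    qed
  qed (use Mtop Pi_V_subset_topspace[OF mvf] in \<open>auto simp: Pi_Vset_def\<close>)
  ultimately show ?thesis unfolding isolated_invariant_def by blast
qed

section \<open>The Morse decomposition\<close>

lemma ess_solution_limits:
  assumes mvf: "multivector_field X V" and fin: "finite (topspace X)"
    and ess: "ess_solution X V (topspace X) \<phi>"
  obtains M where "M \<in> essential_sccs X V" and "range \<phi> \<subseteq> M"
  | M\<alpha> M\<omega> where "M\<alpha> \<in> essential_sccs X V" and "M\<omega> \<in> essential_sccs X V" and "M\<alpha> \<noteq> M\<omega>"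
    and "alpha_lim X V \<phi> \<subseteq> M\<alpha>" and "omega_lim X V \<phi> \<subseteq> M\<omega>"
    and "\<exists>x\<in>M\<alpha>. \<exists>y\<in>M\<omega>. (x, y) \<in> (GV X V)\<^sup>*"
proof -
  have sol: "full_solution X V (topspace X) \<phi>" and "essential X V \<phi>"
    using ess unfolding ess_solution_def by blast+
  have range: "range \<phi> \<subseteq> topspace X" using sol unfolding full_solution_def by blast
  have "\<forall>n. \<exists>s\<le>n. \<phi> s \<in> topspace X" using range by blast
  then obtain x\<alpha> where x\<alpha>_top: "x\<alpha> \<in> topspace X" and x\<alpha>: "x\<alpha> \<in> uim_minus \<phi>"
    by (rule pigeonhole_uim_minus[OF fin])
  have "\<forall>n. \<exists>s\<le>n. \<phi> (- s) \<in> topspace X" using range by blast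
  then obtain x\<omega> where x\<omega>_top: "x\<omega> \<in> topspace X" and "x\<omega> \<in> uim_minus (\<lambda>s. \<phi> (- s))"
    by (rule pigeonhole_uim_minus[OF fin])
  then have x\<omega>: "x\<omega> \<in> uim_plus \<phi>" unfolding uim_plus_reflect by blast
  define M\<alpha> where "M\<alpha> = scc_of X V x\<alpha>"
  define M\<omega> where "M\<omega> = scc_of X V x\<omega>"
  have scc: "M\<alpha> \<in> scc X V" "M\<omega> \<in> scc X V" and mem: "x\<alpha> \<in> M\<alpha>" "x\<omega> \<in> M\<omega>"
    unfolding M\<alpha>_def M\<omega>_def using x\<alpha>_top x\<omega>_top by (simp_all add: scc_of_in_scc mem_scc_of_self)
  have uim: "uim_minus \<phi> \<subseteq> M\<alpha>" "uim_plus \<phi> \<subseteq> M\<omega>"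
    unfolding M\<alpha>_def M\<omega>_def
    using uim_minus_subset_scc_of[OF sol x\<alpha>] uim_plus_subset_scc_of[OF sol x\<omega>] by simp_all
  have ess\<alpha>: "M\<alpha> \<in> essential_sccs X V"
    unfolding mem_essential_sccs_iff[OF mvf fin scc(1)]
    using critical_if_uim_minus_subset[OF fin mvf range \<open>essential X V \<phi>\<close> _ x\<alpha>] uim(1) by blast
  have ess\<omega>: "M\<omega> \<in> essential_sccs X V"
    unfolding mem_essential_sccs_iff[OF mvf fin scc(2)]
    using critical_if_uim_plus_subset[OF fin mvf range \<open>essential X V \<phi>\<close> _ x\<omega>] uim(2) by blast
  show ?thesis
  proof (cases "M\<alpha> = M\<omega>")
    case True
    have "\<phi> t \<in> M\<alpha>" for t
      using scc_convex[OF mvf scc(1) mem(1) _ uim_minus_reaches[OF sol x\<alpha>] reaches_uim_plus[OF sol x\<omega>]]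
        mem(2) True by blast
    then show ?thesis using that(1)[OF ess\<alpha>] by blast
  next
    case False
    obtain t where "\<phi> t = x\<omega>" using x\<omega> unfolding uim_plus_iff by blast
    then have "(x\<alpha>, x\<omega>) \<in> (GV X V)\<^sup>*" using uim_minus_reaches[OF sol x\<alpha>, of t] by simp
    moreover have "alpha_lim X V \<phi> \<subseteq> M\<alpha>" "omega_lim X V \<phi> \<subseteq> M\<omega>"
      unfolding alpha_lim_def omega_lim_def
      using vhull_subset_scc[OF mvf fin scc(1) uim(1)] vhull_subset_scc[OF mvf fin scc(2) uim(2)] .
    ultimately show ?thesis using that(2)[OF ess\<alpha> ess\<omega> False] mem by blast
  qed
qed

lemma partial_order_on_scc_reach:
  assumes inj: "inj_on Ms P" and scc: "\<And>i. i \<in> P \<Longrightarrow> Ms i \<in> scc X V"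
  shows "partial_order_on P {(i, j). i \<in> P \<and> j \<in> P \<and> (\<exists>x\<in>Ms j. \<exists>y\<in>Ms i. (x, y) \<in> (GV X V)\<^sup>*)}"
    (is "partial_order_on P ?r")
  unfolding partial_order_on_def preorder_on_def
proof (intro conjI)
  show "?r \<subseteq> P \<times> P" by blast
  show "refl_on P ?r"
    unfolding refl_on_def using scc_nonempty[OF scc] by blast
  show "trans ?r"
  proof (rule transI)
    fix i j k assume "(i, j) \<in> ?r" "(j, k) \<in> ?r"
    then obtain x y x' y' where "i \<in> P" "j \<in> P" "k \<in> P" "x \<in> Ms j" "y \<in> Ms i" "(x, y) \<in> (GV X V)\<^sup>*"
      "x' \<in> Ms k" "y' \<in> Ms j" "(x', y') \<in> (GV X V)\<^sup>*" by blast
    moreover from this have "(y', x) \<in> (GV X V)\<^sup>*" using scc_reach[OF scc] by blast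
    ultimately show "(i, k) \<in> ?r" by (blast intro: rtrancl_trans)
  qed
  show "antisym ?r"
  proof (rule antisymI)
    fix i j assume "(i, j) \<in> ?r" "(j, i) \<in> ?r"
    then obtain x y x' y' where ij: "i \<in> P" "j \<in> P" and "x \<in> Ms j" "y \<in> Ms i" "(x, y) \<in> (GV X V)\<^sup>*"
      "x' \<in> Ms i" "y' \<in> Ms j" "(x', y') \<in> (GV X V)\<^sup>*" by blast
    moreover from this have "(y, x') \<in> (GV X V)\<^sup>*" "(y', x) \<in> (GV X V)\<^sup>*"
      using scc_reach[OF scc] by blast+
    ultimately have "(y, x) \<in> (GV X V)\<^sup>*" "y \<in> topspace X"
      using scc_subset_topspace[OF scc] by (blast intro: rtrancl_trans)+
    then have "y \<in> Ms j" using scc_memI[OF scc] ij \<open>x \<in> Ms j\<close> \<open>(x, y) \<in> (GV X V)\<^sup>*\<close> by blast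
    then have "Ms i = Ms j" using scc_disjoint[OF scc scc] ij \<open>y \<in> Ms i\<close> by blast
    then show "i = j" using inj ij unfolding inj_on_def by blast
  qed
qed

lemma morse_decomposition_essential_sccs:
  assumes mvf: "multivector_field X V" and fin: "finite (topspace X)" and "finite P"
    and bij: "bij_betw Ms P (essential_sccs X V)"
    and leq: "\<And>i j. leq i j \<longleftrightarrow> i \<in> P \<and> j \<in> P \<and> (\<exists>x\<in>Ms j. \<exists>y\<in>Ms i. (x, y) \<in> (GV X V)\<^sup>*)"
  shows "morse_decomposition X V P leq Ms"
proof -
  have inj: "inj_on Ms P" and img: "Ms ` P = essential_sccs X V"
    using bij unfolding bij_betw_def by blast+
  have ess: "Ms i \<in> essential_sccs X V" if "i \<in> P" for i using img that by blast
  then have scc: "Ms i \<in> scc X V" if "i \<in> P" for i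
    using that unfolding essential_sccs_def by blast
  have "{(p, q). p \<in> P \<and> q \<in> P \<and> leq p q} =
      {(i, j). i \<in> P \<and> j \<in> P \<and> (\<exists>x\<in>Ms j. \<exists>y\<in>Ms i. (x, y) \<in> (GV X V)\<^sup>*)}"
    using leq by blast
  then have order: "partial_order_on P {(p, q). p \<in> P \<and> q \<in> P \<and> leq p q}"
    using partial_order_on_scc_reach[OF inj scc] by simp
  have limits: "(\<exists>r\<in>P. range \<phi> \<subseteq> Ms r) \<or>
      (\<exists>p\<in>P. \<exists>q\<in>P. leq p q \<and> q \<noteq> p \<and> alpha_lim X V \<phi> \<subseteq> Ms q \<and> omega_lim X V \<phi> \<subseteq> Ms p)"
    if "ess_solution X V (topspace X) \<phi>" for \<phi>
    using ess_solution_limits[OF mvf fin that]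
  proof cases
    case (1 M)
    then obtain r where "r \<in> P" "Ms r = M" unfolding img[symmetric] by blast
    with 1 show ?thesis by blast
  next
    case (2 M\<alpha> M\<omega>)
    obtain q where q: "q \<in> P" "Ms q = M\<alpha>" using 2(1) unfolding img[symmetric] by blast
    obtain p where p: "p \<in> P" "Ms p = M\<omega>" using 2(2) unfolding img[symmetric] by blast
    have "leq p q" unfolding leq using p q 2(6) by simp
    with p q 2(3-5) show ?thesis by blast
  qed
  have sets: "Ms p \<subseteq> topspace X \<and> isolated_invariant X V (Ms p)" if "p \<in> P" for p
    using scc_subset_topspace[OF scc[OF that]] isolated_invariant_essential_scc[OF mvf fin ess[OF that]]
    by blast
  have disjoint: "Ms p \<inter> Ms q = {}" if "p \<in> P" "q \<in> P" "p \<noteq> q" for p q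
  proof (rule ccontr)
    assume "Ms p \<inter> Ms q \<noteq> {}"
    then have "Ms p = Ms q" using scc_disjoint[OF scc[OF that(1)] scc[OF that(2)]] by blast
    with inj that show False unfolding inj_on_def by blast
  qed
  show ?thesis
    unfolding morse_decomposition_def using assms(3) order sets disjoint limits by blast
qed

section \<open>Minimality\<close>

lemma nontrivial_homology_group_0:
  assumes "a \<in> topspace X"
  shows "\<not> trivial_group (homology_group 0 X)"
proof
  assume trivial: "trivial_group (homology_group 0 X)"
  let ?A = "subtopology X {a}"
  let ?h = "hom_induced 0 ?A {} X {} id"
  have inj: "inj_on ?h (carrier (homology_group 0 ?A))"
    by (rule inj_on_hom_induced_inclusion) (simp add: assms)
  have "homology_group 0 ?A \<cong> integer_group"
    by (rule homology_coefficients) (use assms in auto)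
  then have nontrivial: "\<not> trivial_group (homology_group 0 ?A)"
    by (metis isomorphic_group_triviality nontrivial_integer_group group_integer_group
        group_relative_homology_group)
  have "carrier (homology_group 0 ?A) \<subseteq> {\<one>\<^bsub>homology_group 0 ?A\<^esub>}"
  proof
    fix c assume c: "c \<in> carrier (homology_group 0 ?A)"
    have one: "\<one>\<^bsub>homology_group 0 ?A\<^esub> \<in> carrier (homology_group 0 ?A)"
      by (simp add: group.is_monoid monoid.one_closed)
    have "?h c = ?h \<one>\<^bsub>homology_group 0 ?A\<^esub>"
      using hom_induced_carrier[of 0 ?A "{}" X "{}" id] trivial c one unfolding trivial_group_def by blast
    then show "c \<in> {\<one>\<^bsub>homology_group 0 ?A\<^esub>}" using inj c one unfolding inj_on_def by blast
  qed
  then show False using nontrivial group.trivial_group_subset group_relative_homology_group by blast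
qed

lemma critical_subtopology_self:
  assumes "S \<subseteq> topspace X" and "S \<noteq> {}"
  shows "critical (subtopology X S) S"
proof -
  have top: "topspace (subtopology X S) = S" using assms(1) by auto
  then have cl: "cl (subtopology X S) S = S"
    unfolding cl_def using closure_of_topspace[of "subtopology X S"] by simp
  have mo: "mo (subtopology X S) S = {}" unfolding mo_def cl by simp
  have sub: "subtopology (subtopology X S) S = subtopology X S"
    by (simp add: subtopology_subtopology)
  obtain a where "a \<in> S" using assms(2) by blast
  then have "\<not> trivial_group (homology_group 0 (subtopology X S))"
    using nontrivial_homology_group_0[of a "subtopology X S"] assms(1) by auto
  then show ?thesis unfolding critical_def cl mo sub by blast
qed

lemma morse_decomposition_subset:
  "morse_decomposition X V P leq M \<Longrightarrow> p \<in> P \<Longrightarrow> M p \<subseteq> topspace X"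
  unfolding morse_decomposition_def by blast

lemma morse_decomposition_disjoint:
  "morse_decomposition X V P leq M \<Longrightarrow> p \<in> P \<Longrightarrow> q \<in> P \<Longrightarrow> p \<noteq> q \<Longrightarrow> M p \<inter> M q = {}"
  unfolding morse_decomposition_def by blast

lemma morse_decomposition_solution:
  assumes "morse_decomposition X V P leq M" and "ess_solution X V (topspace X) \<phi>"
  shows "(\<exists>r\<in>P. range \<phi> \<subseteq> M r) \<or>
    (\<exists>p\<in>P. \<exists>q\<in>P. leq p q \<and> q \<noteq> p \<and> alpha_lim X V \<phi> \<subseteq> M q \<and> omega_lim X V \<phi> \<subseteq> M p)"
  using assms unfolding morse_decomposition_def by blast

lemma scc_unique_nonempty_morse_set:
  assumes mvf: "multivector_field X V" and fin: "finite (topspace X)" and S: "S \<in> scc X V"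
    and md: "morse_decomposition (subtopology X S) (induced_field V S) Q leQ N"
    and "p \<in> Q" and "q \<in> Q" and "N p \<noteq> {}" and "N q \<noteq> {}"
  shows "p = q"
proof -
  let ?Y = "subtopology X S" and ?W = "induced_field V S"
  have Stop: "S \<subseteq> topspace X" using scc_subset_topspace[OF S] .
  have top: "topspace ?Y = S" using Stop by auto
  note cell_eq = cell_induced_field[OF mvf compatible_scc[OF mvf S] Stop]
  obtain x0 where "x0 \<in> S" using scc_nonempty[OF S] by blast
  then obtain \<psi> and L :: int where L: "L > 0" and per: "\<And>t k. \<psi> (t + k * L) = \<psi> t"
    and range: "range \<psi> = S" and step: "\<And>t. \<psi> (t + 1) \<in> Pi_V X V (\<psi> t)"
    using scc_periodic_solution[OF mvf fin S] by metis
  have "full_solution ?Y ?W (topspace ?Y) \<psi>"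
    unfolding full_solution_def top
    using range step Pi_V_induced_field[OF mvf compatible_scc[OF mvf S] Stop] by auto
  moreover have "essential ?Y ?W \<psi>"
  proof (rule essential_periodicI[OF L per])
    fix t assume regular: "\<not> critical ?Y (cell ?W (\<psi> t))"
    have "\<psi> t \<in> S" using range by auto
    then have "cell ?W (\<psi> t) \<subseteq> S" using cell_eq cell_subset_scc[OF mvf S] by simp
    then show "\<not> range \<psi> \<subseteq> cell ?W (\<psi> t)"
      using regular critical_subtopology_self[OF Stop scc_nonempty[OF S]] range by auto
  qed
  ultimately have ess: "ess_solution ?Y ?W (topspace ?Y) \<psi>" unfolding ess_solution_def by blast
  have Nsub: "N r \<subseteq> S" if "r \<in> Q" for r
    using morse_decomposition_subset[OF md that] top by simp
  note Ndisj = morse_decomposition_disjoint[OF md]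
  have recurrent: "\<psi> 0 \<in> alpha_lim ?Y ?W \<psi>" "\<psi> 0 \<in> omega_lim ?Y ?W \<psi>"
    unfolding alpha_lim_def omega_lim_def
    using subsetD[OF subset_vhull periodic_mem_uim(1)[OF L per]]
      subsetD[OF subset_vhull periodic_mem_uim(2)[OF L per]] by blast+
  (* both limit sets contain \<psi> 0, so they cannot lie in two disjoint Morse sets *)
  from morse_decomposition_solution[OF md ess] obtain r where r: "r \<in> Q" "S \<subseteq> N r"
    using recurrent Ndisj range by blast
  have "N r' = {}" if "r' \<in> Q" "r' \<noteq> r" for r'
    using Nsub[OF that(1)] Ndisj[OF that(1) r(1) that(2)] r(2) by blast
  then show "p = q" using assms(5-8) by blast
qed

theorem theorem7p3:
  fixes X :: "'a topology" and V :: "'a set set"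
    and P :: "'i set" and Ms :: "'i \<Rightarrow> 'a set"
    and leq :: "'i \<Rightarrow> 'i \<Rightarrow> bool"
  assumes "finite (topspace X)" and "t0_space X"
    and "multivector_field X V"
    and "invariant X V (topspace X)"
    and "finite P"
    and "bij_betw Ms P {M \<in> scc X V. \<exists>\<phi>. ess_solution X V (topspace X) \<phi> \<and> range \<phi> \<subseteq> M}"
    and "\<And>i j. leq i j \<longleftrightarrow> i \<in> P \<and> j \<in> P \<and>
           (\<exists>\<phi> a b. vpath X V (topspace X) \<phi> a b \<and> \<phi> a \<in> Ms j \<and> \<phi> b \<in> Ms i)"
  shows "partial_order_on P {(i, j). leq i j}
    \<and> morse_decomposition X V P leq Ms
    \<and> (\<forall>i\<in>P. \<forall>(Q :: 'q set) leQ (N :: 'q \<Rightarrow> 'a set).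
          morse_decomposition (subtopology X (Ms i)) (induced_field V (Ms i)) Q leQ N \<longrightarrow>
          \<not> (\<exists>p\<in>Q. \<exists>q\<in>Q. p \<noteq> q \<and> N p \<noteq> {} \<and> N q \<noteq> {}))"
proof -
  note fin = assms(1) and mvf = assms(3)
  have bij: "bij_betw Ms P (essential_sccs X V)" using assms(6) unfolding essential_sccs_def .
  then have scc: "Ms i \<in> scc X V" if "i \<in> P" for i
    using that unfolding bij_betw_def essential_sccs_def by blast
  have leq: "leq i j \<longleftrightarrow> i \<in> P \<and> j \<in> P \<and> (\<exists>x\<in>Ms j. \<exists>y\<in>Ms i. (x, y) \<in> (GV X V)\<^sup>*)" for i j
  proof (cases "i \<in> P \<and> j \<in> P")
    case True
    then show ?thesis
      using ex_vpath_iff_rtrancl[OF mvf scc_subset_topspace[OF scc], of j "Ms i"] unfolding assms(7) by simp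
  qed (use assms(7) in blast)
  have morse: "morse_decomposition X V P leq Ms"
    using morse_decomposition_essential_sccs[OF mvf fin assms(5) bij leq] .
  moreover have "{(i, j). leq i j} = {(i, j). i \<in> P \<and> j \<in> P \<and> leq i j}" using leq by blast
  ultimately have "partial_order_on P {(i, j). leq i j}" unfolding morse_decomposition_def by simp
  moreover have "\<not> (\<exists>p\<in>Q. \<exists>q\<in>Q. p \<noteq> q \<and> N p \<noteq> {} \<and> N q \<noteq> {})"
    if "i \<in> P" and "morse_decomposition (subtopology X (Ms i)) (induced_field V (Ms i)) Q leQ N"
    for i and Q :: "'q set" and leQ N
    using scc_unique_nonempty_morse_set[OF mvf fin scc[OF that(1)] that(2)] by blast
  ultimately show ?thesis using morse by blast
qed

end
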